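(* Let $0<a<1$ and let $\tau_1,\tau_2:[0,a]\to[0,1]$ be continuously differentiable, strictly increasing maps with $\tau_i(0)=0$, $\tau_i(a)=1$, $\tau_1(x)\le x/a$ and $\tau_2(x)\ge x/a$, such that $\tau_{21}=\tau_2^{-1}\circ\tau_1:[0,a]\to[0,a]$ is continuously differentiable and satisfies $\tau_{21}(x)<x$ for $x\in(0,a)$. Let $0<\widehat a<a$ and $\sigma<1$ be such that $\tau_{21}'(x)\le\sigma$ for $x\in[0,\widehat a]$, and let $p$ be the unique bounded solution on $[0,\widehat a]$ of $$p(x)=p(\tau_{21}(x))\,\tau_{21}'(x)-\left[\tau_{21}'(x)-a\,\tau_1'(x)\right].\qquad(\ast)$$ Then $p$ extends uniquely to a function on $[0,a)$ satisfying $(\ast)$ for all $x\in[0,a)$, and this extension is given for every $x\in[0,a)$ by the convergent series $$p(x)=\sum_{n=0}^\infty B(\tau_{21}^n(x))\,(\tau_{21}^n)'(x),\qquad B(x)=a\,\tau_1'(x)-\tau_{21}'(x).$$ In particular, the resulting function on $[0,a)$ does not depend on the choice of $\widehat a$. *)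

theory Defs
  imports "HOL-Analysis.Analysis"
begin

end

theory Submission
  imports Defs
begin

text \<open>Write the functional equation as \<open>p = p \<circ> T \<cdot> T' + B\<close> with \<open>T = \<tau>21\<close>. Unfolding it \<open>N\<close>
  times along the orbit of \<open>x\<close> gives the \<open>N\<close>-th partial sum of the series plus the remainder
  \<open>p (T\<^sup>N x) \<cdot> (T\<^sup>N)'(x)\<close>. On \<open>[0, ah]\<close> the remainder is \<open>O(\<sigma>\<^sup>N)\<close>, because \<open>p\<close> is bounded and
  \<open>0 \<le> T' \<le> \<sigma>\<close> there (\<open>T\<close> is increasing), so the bounded solution is the sum of the series.
  Every orbit in \<open>[0, a)\<close> decreases to a fixed point of \<open>T\<close>, which can only be \<open>0\<close>, and so enters
  \<open>[0, ah]\<close>. Shifting the series along the orbit gives convergence and the equation on \<open>[0, a)\<close>,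
  and unfolding the equation until the orbit enters \<open>[0, ah]\<close> gives uniqueness.\<close>

text \<open>For \<open>d = T'\<close> this is \<open>(T\<^sup>n)'(x)\<close>, by the chain rule.\<close>

definition orbit_prod :: "('a \<Rightarrow> 'a) \<Rightarrow> ('a \<Rightarrow> 'b::comm_monoid_mult) \<Rightarrow> nat \<Rightarrow> 'a \<Rightarrow> 'b" where
  "orbit_prod T d n x = (\<Prod>j<n. d ((T ^^ j) x))"

lemma orbit_prod_0 [simp]: "orbit_prod T d 0 x = 1"
  by (simp add: orbit_prod_def)

lemma orbit_prod_Suc: "orbit_prod T d (Suc n) x = orbit_prod T d n x * d ((T ^^ n) x)"
  by (simp add: orbit_prod_def)

lemma orbit_prod_add: "orbit_prod T d (n + N) x = orbit_prod T d N x * orbit_prod T d n ((T ^^ N) x)"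
  by (induction n) (simp_all add: orbit_prod_Suc funpow_add mult.assoc)

lemma orbit_prod_Suc_left: "orbit_prod T d (Suc n) x = d x * orbit_prod T d n (T x)"
  using orbit_prod_add[of T d n 1 x] by (simp add: orbit_prod_def)

lemma funpow_in_invariant: "T ` S \<subseteq> S \<Longrightarrow> x \<in> S \<Longrightarrow> (T ^^ n) x \<in> S"
  by (induction n) auto

lemma has_real_derivative_funpow:
  assumes T: "T ` S \<subseteq> S" and deriv: "\<And>y. y \<in> S \<Longrightarrow> (T has_real_derivative d y) (at y within S)"
    and x: "x \<in> S"
  shows "((T ^^ n) has_real_derivative orbit_prod T d n x) (at x within S)"
proof (induction n)
  case 0
  show ?case by (simp add: id_def)
next
  case (Suc n)
  have "(T ^^ n) ` S \<subseteq> S"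
    using funpow_in_invariant[OF T] by blast
  then have "(T has_real_derivative d ((T ^^ n) x)) (at ((T ^^ n) x) within (T ^^ n) ` S)"
    using deriv funpow_in_invariant[OF T x] has_field_derivative_subset by blast
  from DERIV_image_chain[OF this Suc.IH] show ?case
    by (simp add: orbit_prod_Suc mult.commute o_def)
qed

lemma vector_derivative_funpow:
  assumes T: "T ` {c..e} \<subseteq> {c..e}"
    and deriv: "\<And>y. y \<in> {c..e} \<Longrightarrow> (T has_real_derivative d y) (at y within {c..e})"
    and "c < e" and x: "x \<in> {c..e}"
  shows "vector_derivative (T ^^ n) (at x within {c..(e::real)}) = orbit_prod T d n x"
  using has_real_derivative_funpow[OF T deriv x, of n] assms
  by (intro vector_derivative_within_closed_interval)
     (auto simp: has_real_derivative_iff_has_vector_derivative)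

lemma mono_on_has_real_derivative_nonneg:
  assumes mono: "mono_on S f" and deriv: "(f has_real_derivative D) (at x within S)"
    and x: "x \<in> S" and nontriv: "at x within S \<noteq> bot"
  shows "0 \<le> D"
proof (rule tendsto_lowerbound[OF _ _ nontriv])
  show "((\<lambda>y. (f y - f x) / (y - x)) \<longlongrightarrow> D) (at x within S)"
    using deriv has_field_derivative_iff by blast
  have "0 \<le> (f y - f x) / (y - x)" if "y \<in> S" for y
    using mono_onD[OF mono x that] mono_onD[OF mono that x]
    by (cases "x \<le> y") (auto intro: divide_nonneg_nonneg divide_nonpos_nonpos)
  then show "\<forall>\<^sub>F y in at x within S. 0 \<le> (f y - f x) / (y - x)"
    by (auto simp: eventually_at_filter)
qed

lemma the_inv_into_comp_self_map:
  fixes f g T :: "real \<Rightarrow> real"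
  assumes "c \<le> e" and g_cont: "continuous_on {c..e} g" and g_mono: "strict_mono_on {c..e} g"
    and f_mono: "mono_on {c..e} f" and f_range: "f ` {c..e} \<subseteq> {g c..g e}"
    and T_def: "\<And>x. x \<in> {c..e} \<Longrightarrow> T x = the_inv_into {c..e} g (f x)"
  shows "T ` {c..e} \<subseteq> {c..e}" and "mono_on {c..e} T" and "f c = g c \<Longrightarrow> T c = c"
proof -
  have inj: "inj_on g {c..e}"
    using g_mono strict_mono_on_imp_inj_on by blast
  have f_img: "f x \<in> g ` {c..e}" if x: "x \<in> {c..e}" for x
  proof -
    have "f x \<in> {g c..g e}"
      using f_range x by blast
    then obtain y where "c \<le> y" "y \<le> e" "g y = f x"
      using IVT'[of g c "f x" e] g_cont \<open>c \<le> e\<close> by auto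
    then show ?thesis by force
  qed
  show maps: "T ` {c..e} \<subseteq> {c..e}"
    using the_inv_into_into[OF inj f_img subset_refl] T_def by auto
  show "mono_on {c..e} T"
  proof (rule mono_onI)
    fix x y assume xy: "x \<in> {c..e}" "y \<in> {c..e}" "x \<le> y"
    have "g (T x) \<le> g (T y)"
      using f_the_inv_into_f[OF inj f_img] mono_onD[OF f_mono] T_def xy by simp
    then show "T x \<le> T y"
      using strict_mono_on_less_eq[OF g_mono] maps xy by blast
  qed
  show "T c = c" if "f c = g c"
    using T_def[of c] the_inv_into_f_f[OF inj, of c] that \<open>c \<le> e\<close> by simp
qed

lemma funpow_tendsto_0:
  fixes T :: "real \<Rightarrow> real"
  assumes cont: "continuous_on {0..<a} T" and below: "\<And>y. y \<in> {0..<a} \<Longrightarrow> 0 \<le> T y \<and> T y \<le> y"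
    and lt: "\<And>y. y \<in> {0<..<a} \<Longrightarrow> T y < y" and x: "x \<in> {0..<a}"
  shows "(\<lambda>n. (T ^^ n) x) \<longlonglongrightarrow> 0"
proof -
  define s where "s = (\<lambda>n. (T ^^ n) x)"
  have "T ` {0..<a} \<subseteq> {0..<a}"
    using below by fastforce
  then have s_in: "s n \<in> {0..<a}" for n
    unfolding s_def using x by (rule funpow_in_invariant)
  have s_Suc: "s (Suc n) = T (s n)" for n
    by (simp add: s_def)
  have dec: "decseq s"
    by (rule decseq_SucI) (use s_Suc below s_in in auto)
  have nonneg: "\<forall>n. 0 \<le> s n"
    using s_in by simp
  obtain L where L: "s \<longlonglongrightarrow> L" "\<And>n. L \<le> s n"
    using decseq_convergent[OF dec nonneg] by blast
  have L_in: "L \<in> {0..<a}"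
    using LIMSEQ_le_const[OF L(1), of 0] nonneg L(2)[of 0] s_in[of 0] by auto
  have "(\<lambda>n. T (s n)) \<longlonglongrightarrow> T L"
    using continuous_on_tendsto_compose[OF cont L(1) L_in] s_in by simp
  moreover have "(\<lambda>n. T (s n)) \<longlonglongrightarrow> L"
    using LIMSEQ_Suc[OF L(1)] by (simp add: s_Suc)
  ultimately have "T L = L"
    using LIMSEQ_unique by blast
  then have "L = 0"
    using lt[of L] L_in by fastforce
  then show ?thesis
    using L(1) by (simp add: s_def)
qed

lemma funpow_reaches_Icc:
  fixes T :: "real \<Rightarrow> real"
  assumes cont: "continuous_on {0..<a} T" and below: "\<And>y. y \<in> {0..<a} \<Longrightarrow> 0 \<le> T y \<and> T y \<le> y"
    and lt: "\<And>y. y \<in> {0<..<a} \<Longrightarrow> T y < y" and x: "x \<in> {0..<a}" and "0 < e"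
  shows "\<exists>N. (T ^^ N) x \<in> {0..e}"
proof -
  have "\<forall>\<^sub>F N in sequentially. (T ^^ N) x < e"
    using order_tendstoD(2)[OF funpow_tendsto_0[OF cont below lt x] \<open>0 < e\<close>] .
  then obtain N where "(T ^^ N) x < e"
    by (auto simp: eventually_sequentially)
  moreover have "T ` {0..<a} \<subseteq> {0..<a}"
    using below by fastforce
  ultimately show ?thesis
    using funpow_in_invariant[OF _ x, of T N] by auto
qed

lemma funpow_expansion:
  fixes f d b :: "'a \<Rightarrow> 'b::comm_semiring_1"
  assumes T: "T ` S \<subseteq> S" and eq: "\<And>y. y \<in> S \<Longrightarrow> f y = f (T y) * d y + b y" and x: "x \<in> S"
  shows "f x = (\<Sum>k<N. b ((T ^^ k) x) * orbit_prod T d k x) + f ((T ^^ N) x) * orbit_prod T d N x"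
proof (induction N)
  case 0
  show ?case by simp
next
  case (Suc N)
  have "f ((T ^^ N) x) = f ((T ^^ Suc N) x) * d ((T ^^ N) x) + b ((T ^^ N) x)"
    using eq[OF funpow_in_invariant[OF T x]] by simp
  with Suc.IH show ?case
    by (simp add: orbit_prod_Suc algebra_simps)
qed

lemma funpow_solution_unique:
  fixes f g d b :: "'a \<Rightarrow> 'b::comm_semiring_1"
  assumes T: "T ` S \<subseteq> S"
    and f: "\<And>y. y \<in> S \<Longrightarrow> f y = f (T y) * d y + b y"
    and g: "\<And>y. y \<in> S \<Longrightarrow> g y = g (T y) * d y + b y"
    and x: "x \<in> S" and agree: "f ((T ^^ N) x) = g ((T ^^ N) x)"
  shows "f x = g x"
  using funpow_expansion[where f=f and N=N, OF T f x] funpow_expansion[where f=g and N=N, OF T g x] agree by simp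

lemma abs_orbit_prod_le:
  fixes d :: "'a \<Rightarrow> real"
  assumes T: "T ` S \<subseteq> S" and d: "\<And>y. y \<in> S \<Longrightarrow> \<bar>d y\<bar> \<le> \<sigma>" and x: "x \<in> S"
  shows "\<bar>orbit_prod T d n x\<bar> \<le> \<sigma> ^ n"
proof (induction n)
  case 0
  show ?case by simp
next
  case (Suc n)
  have "\<bar>orbit_prod T d n x\<bar> * \<bar>d ((T ^^ n) x)\<bar> \<le> \<sigma> ^ n * \<sigma>"
    using mult_mono[OF Suc.IH d[OF funpow_in_invariant[OF T x]]] Suc.IH by auto
  then show ?case
    by (simp add: orbit_prod_Suc abs_mult mult.commute)
qed

lemma bounded_solution_sums:
  fixes f d b :: "'a \<Rightarrow> real"
  assumes T: "T ` S \<subseteq> S" and d: "\<And>y. y \<in> S \<Longrightarrow> \<bar>d y\<bar> \<le> \<sigma>" and "\<sigma> < 1"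
    and f: "\<And>y. y \<in> S \<Longrightarrow> \<bar>f y\<bar> \<le> M"
    and eq: "\<And>y. y \<in> S \<Longrightarrow> f y = f (T y) * d y + b y" and x: "x \<in> S"
  shows "(\<lambda>n. b ((T ^^ n) x) * orbit_prod T d n x) sums f x"
proof -
  define R where "R N = f ((T ^^ N) x) * orbit_prod T d N x" for N
  have "0 \<le> \<sigma>" "0 \<le> M"
    using d[OF x] f[OF x] by linarith+
  have "norm (R N) \<le> M * \<sigma> ^ N" for N
    unfolding R_def real_norm_def abs_mult
    by (rule mult_mono[OF f[OF funpow_in_invariant[OF T x]] abs_orbit_prod_le[OF T d x]])
       (simp_all add: \<open>0 \<le> M\<close>)
  then have bound: "\<forall>\<^sub>F N in sequentially. norm (R N) \<le> M * \<sigma> ^ N"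
    by (intro always_eventually allI)
  have "(\<lambda>N. M * \<sigma> ^ N) \<longlonglongrightarrow> 0"
    by (intro tendsto_mult_right_zero LIMSEQ_power_zero) (use \<open>0 \<le> \<sigma>\<close> \<open>\<sigma> < 1\<close> in simp)
  with bound have "R \<longlonglongrightarrow> 0"
    by (rule Lim_null_comparison)
  then have "(\<lambda>N. f x - R N) \<longlonglongrightarrow> f x"
    using tendsto_diff[of "\<lambda>_. f x" "f x" sequentially R 0] by simp
  moreover have "f x - R N = (\<Sum>k<N. b ((T ^^ k) x) * orbit_prod T d k x)" for N
    using funpow_expansion[where f=f and N=N, OF T eq x] by (simp add: R_def)
  ultimately show ?thesis
    by (simp add: sums_def)
qed

lemma summable_orbit_series_funpow:
  fixes d b :: "'a \<Rightarrow> real"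
  assumes "summable (\<lambda>n. b ((T ^^ n) ((T ^^ N) x)) * orbit_prod T d n ((T ^^ N) x))"
  shows "summable (\<lambda>n. b ((T ^^ n) x) * orbit_prod T d n x)"
proof -
  have "summable (\<lambda>n. b ((T ^^ n) ((T ^^ N) x)) * orbit_prod T d n ((T ^^ N) x) * orbit_prod T d N x)"
    using assms by (rule summable_mult2)
  then have "summable (\<lambda>n. b ((T ^^ (n + N)) x) * orbit_prod T d (n + N) x)"
    by (simp add: orbit_prod_add funpow_add mult_ac)
  then show ?thesis
    by (rule summable_offset)
qed

lemma orbit_series_step:
  fixes d b :: "'a \<Rightarrow> real"
  assumes "summable (\<lambda>n. b ((T ^^ n) (T x)) * orbit_prod T d n (T x))"
  shows "(\<Sum>n. b ((T ^^ n) x) * orbit_prod T d n x)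
       = (\<Sum>n. b ((T ^^ n) (T x)) * orbit_prod T d n (T x)) * d x + b x"
proof -
  have "(\<lambda>n. b ((T ^^ n) (T x)) * orbit_prod T d n (T x) * d x)
          sums ((\<Sum>n. b ((T ^^ n) (T x)) * orbit_prod T d n (T x)) * d x)"
    using summable_sums[OF assms] by (rule sums_mult2)
  then have "(\<lambda>n. b ((T ^^ Suc n) x) * orbit_prod T d (Suc n) x)
          sums ((\<Sum>n. b ((T ^^ n) (T x)) * orbit_prod T d n (T x)) * d x)"
    by (simp add: orbit_prod_Suc_left funpow_swap1 mult_ac)
  from sums_unique[OF sums_Suc[OF this]] show ?thesis
    by simp
qed

lemma orbit_series_extension:
  fixes T :: "'a \<Rightarrow> 'a" and d b p :: "'a \<Rightarrow> real"
  assumes U: "T ` U \<subseteq> U" and S: "T ` S \<subseteq> S" "S \<subseteq> U"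
    and reach: "\<forall>x\<in>U. \<exists>N. (T ^^ N) x \<in> S"
    and d: "\<forall>y\<in>S. \<bar>d y\<bar> \<le> \<sigma>" and "\<sigma> < 1"
    and p: "\<forall>y\<in>S. \<bar>p y\<bar> \<le> M"
    and p_eq: "\<forall>y\<in>S. p y = p (T y) * d y + b y"
  defines "q \<equiv> \<lambda>x. \<Sum>n. b ((T ^^ n) x) * orbit_prod T d n x"
  shows "x \<in> U \<Longrightarrow> summable (\<lambda>n. b ((T ^^ n) x) * orbit_prod T d n x)"
    and "x \<in> S \<Longrightarrow> q x = p x"
    and "x \<in> U \<Longrightarrow> q x = q (T x) * d x + b x"
    and "\<lbrakk>\<And>y. y \<in> S \<Longrightarrow> q' y = p y; \<And>y. y \<in> U \<Longrightarrow> q' y = q' (T y) * d y + b y; x \<in> U\<rbrakk>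
      \<Longrightarrow> q' x = q x"
proof -
  have sums_p: "(\<lambda>n. b ((T ^^ n) y) * orbit_prod T d n y) sums p y" if "y \<in> S" for y
    using bounded_solution_sums[where f=p and b=b, OF S(1) bspec[OF d] \<open>\<sigma> < 1\<close> bspec[OF p] bspec[OF p_eq] that] .
  have summable: "summable (\<lambda>n. b ((T ^^ n) y) * orbit_prod T d n y)" if y: "y \<in> U" for y
  proof -
    obtain N where "(T ^^ N) y \<in> S"
      using reach y by blast
    then show ?thesis
      by (rule summable_orbit_series_funpow[OF sums_summable[OF sums_p]])
  qed
  then show "x \<in> U \<Longrightarrow> summable (\<lambda>n. b ((T ^^ n) x) * orbit_prod T d n x)" .
  have q_p: "q y = p y" if "y \<in> S" for y
    using sums_unique[OF sums_p[OF that]] unfolding q_def by simp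
  then show "x \<in> S \<Longrightarrow> q x = p x" .
  have q_eq: "q y = q (T y) * d y + b y" if "y \<in> U" for y
    unfolding q_def using U that by (intro orbit_series_step summable) blast
  then show "x \<in> U \<Longrightarrow> q x = q (T x) * d x + b x" .
  assume q'_p: "\<And>y. y \<in> S \<Longrightarrow> q' y = p y"
    and q'_eq: "\<And>y. y \<in> U \<Longrightarrow> q' y = q' (T y) * d y + b y" and x: "x \<in> U"
  obtain N where "(T ^^ N) x \<in> S"
    using reach x by blast
  then show "q' x = q x"
    using funpow_solution_unique[where f=q' and g=q and b=b, OF U q'_eq q_eq x] q'_p q_p by metis
qed

lemma orbit_series_extension_Icc:
  fixes T d b p :: "real \<Rightarrow> real"
  assumes "0 < e" "e < a"
    and T_maps: "T ` {0..a} \<subseteq> {0..a}" and T_mono: "mono_on {0..a} T" and "T 0 = 0"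
    and T_lt: "\<forall>x\<in>{0<..<a}. T x < x"
    and T_deriv: "\<forall>x\<in>{0..a}. (T has_real_derivative d x) (at x within {0..a})"
    and "\<sigma> < 1" and d_le: "\<forall>x\<in>{0..e}. d x \<le> \<sigma>"
    and p_bdd: "bounded (p ` {0..e})"
    and p_eq: "\<forall>x\<in>{0..e}. p x = p (T x) * d x + b x"
  shows "(\<forall>x\<in>{0..<a}. summable (\<lambda>n. b ((T ^^ n) x) * vector_derivative (T ^^ n) (at x within {0..a})))
     \<and> (let q = (\<lambda>x. \<Sum>n. b ((T ^^ n) x) * vector_derivative (T ^^ n) (at x within {0..a}))
        in (\<forall>x\<in>{0..e}. q x = p x)
         \<and> (\<forall>x\<in>{0..<a}. q x = q (T x) * d x + b x)
         \<and> (\<forall>q'. (\<forall>x\<in>{0..e}. q' x = p x) \<and> (\<forall>x\<in>{0..<a}. q' x = q' (T x) * d x + b x)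
                \<longrightarrow> (\<forall>x\<in>{0..<a}. q' x = q x)))"
proof -
  have below: "0 \<le> T y \<and> T y \<le> y" if "y \<in> {0..<a}" for y
    using T_maps T_lt \<open>T 0 = 0\<close> that by (cases "y = 0") (auto simp: image_subset_iff less_imp_le)
  have U: "T ` {0..<a} \<subseteq> {0..<a}" and S: "T ` {0..e} \<subseteq> {0..e}" "{0..e} \<subseteq> {0..<a}"
    using below \<open>e < a\<close> by fastforce+
  have "0 \<le> d y" if "y \<in> {0..a}" for y
    using mono_on_has_real_derivative_nonneg[OF T_mono T_deriv[rule_format, OF that] that]
      trivial_limit_within islimpt_Icc[of 0 a] \<open>0 < e\<close> \<open>e < a\<close> that by fastforce
  then have d_bound: "\<forall>y\<in>{0..e}. \<bar>d y\<bar> \<le> \<sigma>"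
    using d_le \<open>e < a\<close> by fastforce
  obtain M where p_bound: "\<forall>y\<in>{0..e}. \<bar>p y\<bar> \<le> M"
    using p_bdd unfolding bounded_iff by (metis image_eqI real_norm_def)
  have "continuous_on {0..a} T"
    using T_deriv by (intro DERIV_continuous_on) auto
  then have "continuous_on {0..<a} T"
    by (rule continuous_on_subset) auto
  then have reach: "\<forall>x\<in>{0..<a}. \<exists>N. (T ^^ N) x \<in> {0..e}"
    using funpow_reaches_Icc below T_lt \<open>0 < e\<close> by blast
  have weights: "vector_derivative (T ^^ n) (at x within {0..a}) = orbit_prod T d n x"
    if "x \<in> {0..<a}" for n x
    using vector_derivative_funpow[OF T_maps T_deriv[rule_format]] that \<open>0 < e\<close> \<open>e < a\<close> by simp
  define q where "q x = (\<Sum>n. b ((T ^^ n) x) * orbit_prod T d n x)" for x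
  define Q where "Q x = (\<Sum>n. b ((T ^^ n) x) * vector_derivative (T ^^ n) (at x within {0..a}))" for x
  have Q_q: "Q x = q x" if "x \<in> {0..<a}" for x
    using weights[OF that] by (simp add: Q_def q_def)
  note ext = orbit_series_extension[where p=p and b=b and d=d,
      OF U S reach d_bound \<open>\<sigma> < 1\<close> p_bound p_eq, folded q_def]
  show ?thesis
    unfolding Let_def Q_def[symmetric]
  proof (intro conjI allI impI ballI)
    fix x assume x: "x \<in> {0..<a}"
    then show "summable (\<lambda>n. b ((T ^^ n) x) * vector_derivative (T ^^ n) (at x within {0..a}))"
      using ext(1)[OF x] weights by simp
  next
    fix x assume x: "x \<in> {0..e}"
    then show "Q x = p x"
      using ext(2)[OF x] Q_q S(2) by auto
  next
    fix x assume x: "x \<in> {0..<a}"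
    then have "T x \<in> {0..<a}"
      using U by blast
    then show "Q x = Q (T x) * d x + b x"
      using ext(3)[OF x] Q_q x by simp
  next
    fix q' x assume q': "(\<forall>y\<in>{0..e}. q' y = p y) \<and> (\<forall>y\<in>{0..<a}. q' y = q' (T y) * d y + b y)"
      and x: "x \<in> {0..<a}"
    then show "q' x = Q x"
      using ext(4)[OF bspec[OF conjunct1[OF q']] bspec[OF conjunct2[OF q']] x] Q_q[OF x] by simp
  qed
qed

theorem proposition4:
  fixes a ah \<sigma> :: real
    and \<tau>1 \<tau>2 \<tau>21 d1 d2 d21 p :: "real \<Rightarrow> real"
  assumes a_pos: "0 < a" and a_lt1: "a < 1"
    and tau1_C1: "\<forall>x\<in>{0..a}. (\<tau>1 has_real_derivative d1 x) (at x within {0..a})"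
    and d1_cont: "continuous_on {0..a} d1"
    and tau2_C1: "\<forall>x\<in>{0..a}. (\<tau>2 has_real_derivative d2 x) (at x within {0..a})"
    and d2_cont: "continuous_on {0..a} d2"
    and tau1_range: "\<tau>1 ` {0..a} \<subseteq> {0..1}"
    and tau2_range: "\<tau>2 ` {0..a} \<subseteq> {0..1}"
    and tau1_mono: "strict_mono_on {0..a} \<tau>1"
    and tau2_mono: "strict_mono_on {0..a} \<tau>2"
    and tau1_0: "\<tau>1 0 = 0" and tau1_a: "\<tau>1 a = 1"
    and tau2_0: "\<tau>2 0 = 0" and tau2_a: "\<tau>2 a = 1"
    and tau1_le: "\<forall>x\<in>{0..a}. \<tau>1 x \<le> x / a"
    and tau2_ge: "\<forall>x\<in>{0..a}. \<tau>2 x \<ge> x / a"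
    and tau21_def: "\<forall>x\<in>{0..a}. \<tau>21 x = the_inv_into {0..a} \<tau>2 (\<tau>1 x)"
    and tau21_C1: "\<forall>x\<in>{0..a}. (\<tau>21 has_real_derivative d21 x) (at x within {0..a})"
    and d21_cont: "continuous_on {0..a} d21"
    and tau21_lt: "\<forall>x\<in>{0<..<a}. \<tau>21 x < x"
    and ah_pos: "0 < ah" and ah_lt: "ah < a"
    and sigma_lt: "\<sigma> < 1"
    and d21_le: "\<forall>x\<in>{0..ah}. d21 x \<le> \<sigma>"
    and p_bdd: "bounded (p ` {0..ah})"
    and p_eq: "\<forall>x\<in>{0..ah}. p x = p (\<tau>21 x) * d21 x - (d21 x - a * d1 x)"
  shows "(\<forall>x\<in>{0..<a}. summable (\<lambda>n. (a * d1 ((\<tau>21 ^^ n) x) - d21 ((\<tau>21 ^^ n) x))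
                  * vector_derivative (\<tau>21 ^^ n) (at x within {0..a})))
     \<and> (let q = (\<lambda>x. \<Sum>n. (a * d1 ((\<tau>21 ^^ n) x) - d21 ((\<tau>21 ^^ n) x))
                  * vector_derivative (\<tau>21 ^^ n) (at x within {0..a}))
        in (\<forall>x\<in>{0..ah}. q x = p x)
         \<and> (\<forall>x\<in>{0..<a}. q x = q (\<tau>21 x) * d21 x - (d21 x - a * d1 x))
         \<and> (\<forall>q'. (\<forall>x\<in>{0..ah}. q' x = p x)
                \<and> (\<forall>x\<in>{0..<a}. q' x = q' (\<tau>21 x) * d21 x - (d21 x - a * d1 x))
                \<longrightarrow> (\<forall>x\<in>{0..<a}. q' x = q x)))"
proof -
  have "continuous_on {0..a} \<tau>2"
    using tau2_C1 by (intro DERIV_continuous_on) auto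
  moreover have "\<tau>1 ` {0..a} \<subseteq> {\<tau>2 0..\<tau>2 a}"
    using tau1_range tau2_0 tau2_a by simp
  ultimately have tau21: "\<tau>21 ` {0..a} \<subseteq> {0..a}" "mono_on {0..a} \<tau>21" "\<tau>21 0 = 0"
    using the_inv_into_comp_self_map[OF _ _ tau2_mono strict_mono_on_imp_mono_on[OF tau1_mono] _
        tau21_def[rule_format]] a_pos tau1_0 tau2_0 by auto
  have diff_eq: "u - (v - w) = u + (w - v)" for u v w :: real
    by simp
  show ?thesis
    unfolding diff_eq
    by (rule orbit_series_extension_Icc[where b="\<lambda>x. a * d1 x - d21 x", OF ah_pos ah_lt tau21
          tau21_lt tau21_C1 sigma_lt d21_le p_bdd p_eq[unfolded diff_eq]])
qed

end
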